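(* Let $\widetilde{\Sigma}=\widetilde{\Sigma}_1\uplus\cdots\uplus\widetilde{\Sigma}_n$ with pairwise disjoint visibly pushdown alphabets $\widetilde{\Sigma}_i$. For any visibly pushdown contextual order $\prec$ on $\widetilde{\Sigma}$, there exists a coherent visibly pushdown contextual order $\prec'$ on $\widetilde{\Sigma}$ such that $\mathrm{red}_\prec(P_1\bowtie\cdots\bowtie P_n)=\mathrm{red}_{\prec'}(P_1\parallel\cdots\parallel P_n)$ for any well-matched languages $P_1\subseteq\widetilde{\Sigma}_1^*,\ldots,P_n\subseteq\widetilde{\Sigma}_n^*$.
   Context: A visibly pushdown (VP) alphabet is a finite alphabet partitioned into calls, returns and internals; write $\Sigma^{\mathsf{call}}_i,\Sigma^{\mathsf{ret}}_i$ for the calls and returns of $\widetilde{\Sigma}_i$; $\widetilde{\Sigma}$ has as calls/returns/internals the unions. Calls and returns in a word are matched like opening and closing parentheses (internals ignored); unmatched ones are pending; a word is well-matched if none are pending. A visibly pushdown automaton (VPA) is a pushdown automaton with bottom symbol $\bot$ that pushes one non-$\bot$ symbol on each call, pops the top on each return (reading $\bot$ on empty stack without removing it), and leaves the stack unchanged on internals; it is deterministic if it has one initial state and at most one transition per configuration and letter, and complete if it has at least one. Shuffle: $P_1\parallel\cdots\parallel P_n=\{w\in\widetilde{\Sigma}^*:\Pi_{\widetilde{\Sigma}_i}(w)\in P_i\ \forall i\}$, $\Pi_{\widetilde{\Sigma}_i}$ erasing letters outside $\widetilde{\Sigma}_i$. A word is well-nested if every matched call–return pair consists of letters from the same $\widetilde{\Sigma}_k$;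 the well-nested shuffle $P_1\bowtie\cdots\bowtie P_n$ is the set of well-nested words of $P_1\parallel\cdots\parallel P_n$. $\mathbb{I}=\{(a,b):a\in\widetilde{\Sigma}_i,b\in\widetilde{\Sigma}_j,i\ne j\}$, $\equiv_{\mathbb{I}}$ the least reflexive transitive relation with $uabv\equiv_{\mathbb{I}}ubav$ for $(a,b)\in\mathbb{I}$. A contextual order is a map $\prec$ from $\widetilde{\Sigma}^*$ to strict total orders on $\widetilde{\Sigma}$; it induces $\preceq$: $\sigma\preceq\rho$ iff $\sigma$ is a prefix of $\rho$ or $\sigma=\alpha a\beta$, $\rho=\alpha b\gamma$ with $a\prec_\alpha b$. $\mathrm{red}_\prec(L)=\{w\in L:\forall u\in L,(u\equiv_{\mathbb{I}}w\wedge u\preceq w)\Rightarrow u=w\}$. $\prec$ is visibly pushdown if there is a complete deterministic VPA $A$ over $\widetilde{\Sigma}$ and a map $\mathsf{ord}$ from its states to strict total orders on $\widetilde{\Sigma}$ with $\prec_w=\mathsf{ord}(q)$, $q$ the state reached by $A$ after reading $w$. $\prec$ is coherent if for every $u\in\widetilde{\Sigma}^*$ and every $i$: if $u$ has pending calls and the last one is in $\Sigma^{\mathsf{call}}_i$, then $a\prec_u r$ for all $a\in\widetilde{\Sigma}_i$ and $r\in\bigcup_{j\ne i}\Sigma^{\mathsf{ret}}_j$. *)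

theory Defs
  imports Main
begin

text \<open>
  The global alphabet is the whole finite type 'a.  It is partitioned
  into calls C, returns R and internals (everything else; C and R are assumed disjoint).
  The components are Comp 0, ..., Comp (n-1), pairwise disjoint and covering 'a;
  the calls/returns of component i are C \<inter> Comp i and R \<inter> Comp i.
\<close>

inductive wm :: "'a set \<Rightarrow> 'a set \<Rightarrow> 'a list \<Rightarrow> bool" for C R where
  wm_nil: "wm C R []"
| wm_int: "a \<notin> C \<Longrightarrow> a \<notin> R \<Longrightarrow> wm C R [a]"
| wm_nest: "c \<in> C \<Longrightarrow> r \<in> R \<Longrightarrow> wm C R u \<Longrightarrow> wm C R ([c] @ u @ [r])"
| wm_app: "wm C R u \<Longrightarrow> wm C R v \<Longrightarrow> wm C R (u @ v)"

definition matched :: "'a set \<Rightarrow> 'a set \<Rightarrow> 'a list \<Rightarrow> nat \<Rightarrow> nat \<Rightarrow> bool" where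
  "matched C R w i j \<longleftrightarrow> i < j \<and> j < length w \<and> w ! i \<in> C \<and> w ! j \<in> R \<and>
     wm C R (take (j - i - 1) (drop (Suc i) w))"

definition pending_call :: "'a set \<Rightarrow> 'a set \<Rightarrow> 'a list \<Rightarrow> nat \<Rightarrow> bool" where
  "pending_call C R w i \<longleftrightarrow> i < length w \<and> w ! i \<in> C \<and> \<not> (\<exists>j. matched C R w i j)"

definition pending_ret :: "'a set \<Rightarrow> 'a set \<Rightarrow> 'a list \<Rightarrow> nat \<Rightarrow> bool" where
  "pending_ret C R w j \<longleftrightarrow> j < length w \<and> w ! j \<in> R \<and> \<not> (\<exists>i. matched C R w i j)"

definition well_matched :: "'a set \<Rightarrow> 'a set \<Rightarrow> 'a list \<Rightarrow> bool" where
  "well_matched C R w \<longleftrightarrow> (\<forall>i. \<not> pending_call C R w i) \<and> (\<forall>j. \<not> pending_ret C R w j)"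

definition well_nested :: "'a set \<Rightarrow> 'a set \<Rightarrow> nat \<Rightarrow> (nat \<Rightarrow> 'a set) \<Rightarrow> 'a list \<Rightarrow> bool" where
  "well_nested C R n Comp w \<longleftrightarrow>
     (\<forall>i j. matched C R w i j \<longrightarrow> (\<exists>k<n. w ! i \<in> Comp k \<and> w ! j \<in> Comp k))"

definition proj :: "'a set \<Rightarrow> 'a list \<Rightarrow> 'a list" where
  "proj A w = filter (\<lambda>a. a \<in> A) w"

definition shuffle :: "nat \<Rightarrow> (nat \<Rightarrow> 'a set) \<Rightarrow> (nat \<Rightarrow> 'a list set) \<Rightarrow> 'a list set" where
  "shuffle n Comp P = {w. \<forall>i<n. proj (Comp i) w \<in> P i}"

definition wn_shuffle :: "'a set \<Rightarrow> 'a set \<Rightarrow> nat \<Rightarrow> (nat \<Rightarrow> 'a set) \<Rightarrow> (nat \<Rightarrow> 'a list set) \<Rightarrow> 'a list set" where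
  "wn_shuffle C R n Comp P = {w \<in> shuffle n Comp P. well_nested C R n Comp w}"

definition indep :: "nat \<Rightarrow> (nat \<Rightarrow> 'a set) \<Rightarrow> 'a \<Rightarrow> 'a \<Rightarrow> bool" where
  "indep n Comp a b \<longleftrightarrow> (\<exists>i<n. \<exists>j<n. i \<noteq> j \<and> a \<in> Comp i \<and> b \<in> Comp j)"

definition swap_step :: "nat \<Rightarrow> (nat \<Rightarrow> 'a set) \<Rightarrow> 'a list \<Rightarrow> 'a list \<Rightarrow> bool" where
  "swap_step n Comp x y \<longleftrightarrow>
     (\<exists>u a b v. indep n Comp a b \<and> x = u @ [a, b] @ v \<and> y = u @ [b, a] @ v)"

definition trace_eq :: "nat \<Rightarrow> (nat \<Rightarrow> 'a set) \<Rightarrow> 'a list \<Rightarrow> 'a list \<Rightarrow> bool" where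
  "trace_eq n Comp = (swap_step n Comp)\<^sup>*\<^sup>*"

definition strict_total :: "('a \<Rightarrow> 'a \<Rightarrow> bool) \<Rightarrow> bool" where
  "strict_total r \<longleftrightarrow> (\<forall>a. \<not> r a a) \<and> (\<forall>a b c. r a b \<longrightarrow> r b c \<longrightarrow> r a c) \<and>
     (\<forall>a b. a \<noteq> b \<longrightarrow> r a b \<or> r b a)"

definition contextual_order :: "('a list \<Rightarrow> 'a \<Rightarrow> 'a \<Rightarrow> bool) \<Rightarrow> bool" where
  "contextual_order ord \<longleftrightarrow> (\<forall>w. strict_total (ord w))"

definition ctx_le :: "('a list \<Rightarrow> 'a \<Rightarrow> 'a \<Rightarrow> bool) \<Rightarrow> 'a list \<Rightarrow> 'a list \<Rightarrow> bool" where
  "ctx_le ord s r \<longleftrightarrow> (\<exists>t. r = s @ t) \<or>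
     (\<exists>\<alpha> a b \<beta> \<gamma>. s = \<alpha> @ a # \<beta> \<and> r = \<alpha> @ b # \<gamma> \<and> ord \<alpha> a b)"

definition red :: "nat \<Rightarrow> (nat \<Rightarrow> 'a set) \<Rightarrow> ('a list \<Rightarrow> 'a \<Rightarrow> 'a \<Rightarrow> bool) \<Rightarrow> 'a list set \<Rightarrow> 'a list set" where
  "red n Comp ord L = {w \<in> L. \<forall>u \<in> L. (trace_eq n Comp u w \<and> ctx_le ord u w) \<longrightarrow> u = w}"

text \<open>The stack is a list of (non-bottom) symbols; the empty list means only the bottom
  symbol is present, in which case a return reads the bottom symbol (None) and leaves it.\<close>
definition vpa_step :: "'a set \<Rightarrow> 'a set \<Rightarrow> (nat \<Rightarrow> 'a \<Rightarrow> nat \<times> nat) \<Rightarrow>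
    (nat \<Rightarrow> nat option \<Rightarrow> 'a \<Rightarrow> nat) \<Rightarrow> (nat \<Rightarrow> 'a \<Rightarrow> nat) \<Rightarrow>
    nat \<times> nat list \<Rightarrow> 'a \<Rightarrow> nat \<times> nat list" where
  "vpa_step C R dc dr di cfg a =
     (let q = fst cfg; st = snd cfg in
      if a \<in> C then (fst (dc q a), snd (dc q a) # st)
      else if a \<in> R then (case st of [] \<Rightarrow> (dr q None a, [])
                                   | g # st' \<Rightarrow> (dr q (Some g) a, st'))
      else (di q a, st))"

definition vpa_run :: "'a set \<Rightarrow> 'a set \<Rightarrow> (nat \<Rightarrow> 'a \<Rightarrow> nat \<times> nat) \<Rightarrow>
    (nat \<Rightarrow> nat option \<Rightarrow> 'a \<Rightarrow> nat) \<Rightarrow> (nat \<Rightarrow> 'a \<Rightarrow> nat) \<Rightarrow>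
    nat \<times> nat list \<Rightarrow> 'a list \<Rightarrow> nat \<times> nat list" where
  "vpa_run C R dc dr di cfg w = foldl (vpa_step C R dc dr di) cfg w"

definition vp_order :: "'a set \<Rightarrow> 'a set \<Rightarrow> ('a list \<Rightarrow> 'a \<Rightarrow> 'a \<Rightarrow> bool) \<Rightarrow> bool" where
  "vp_order C R ord \<longleftrightarrow>
     (\<exists>(Q :: nat set) (\<Gamma> :: nat set) q0 dc dr di (f :: nat \<Rightarrow> 'a \<Rightarrow> 'a \<Rightarrow> bool).
        finite Q \<and> finite \<Gamma> \<and> q0 \<in> Q \<and>
        (\<forall>q\<in>Q. \<forall>a. fst (dc q a) \<in> Q \<and> snd (dc q a) \<in> \<Gamma>) \<and>
        (\<forall>q\<in>Q. \<forall>a. dr q None a \<in> Q \<and> (\<forall>g\<in>\<Gamma>. dr q (Some g) a \<in> Q)) \<and>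
        (\<forall>q\<in>Q. \<forall>a. di q a \<in> Q) \<and>
        (\<forall>q\<in>Q. strict_total (f q)) \<and>
        (\<forall>w. ord w = f (fst (vpa_run C R dc dr di (q0, []) w))))"

definition coherent :: "'a set \<Rightarrow> 'a set \<Rightarrow> nat \<Rightarrow> (nat \<Rightarrow> 'a set) \<Rightarrow>
    ('a list \<Rightarrow> 'a \<Rightarrow> 'a \<Rightarrow> bool) \<Rightarrow> bool" where
  "coherent C R n Comp ord \<longleftrightarrow>
     (\<forall>u i. i < n \<longrightarrow> (\<exists>k. pending_call C R u k) \<longrightarrow>
        u ! (GREATEST k. pending_call C R u k) \<in> C \<inter> Comp i \<longrightarrow>
        (\<forall>a \<in> Comp i. \<forall>r. (\<exists>j<n. j \<noteq> i \<and> r \<in> R \<inter> Comp j) \<longrightarrow> ord u a r))"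

end

(*
  The coherent order is the given one with every return that is foreign to the component of
  the topmost pending call moved above all other letters. A visibly pushdown automaton can
  track the component of the topmost pending call on its stack, so the new order is again
  visibly pushdown.

  If a word of the shuffle matches a call of component i with a return of another component,
  then, looking at the innermost such pair, the call must still be matched inside component i
  (the projections are well-matched), so a letter of component i occurs after the return. The
  first one commutes leftwards to the position of the return and wins against it in the
  coherent order. Hence coherent-reduced words of the shuffle are well-nested. Conversely, at
  the first difference of two words where the two orders disagree, the letter preferred by the
  coherent order faces a foreign return, which cannot occur at that position in a well-nested
  word. So on well-nested words both orders select the same representatives.
*)

theory Submission
  imports Defs "HOL-Library.Nat_Bijection"
begin

section \<open>Contextual lexicographic order\<close>

lemma strict_total_irrefl: "strict_total r \<Longrightarrow> \<not> r a a"
  by (simp add: strict_total_def)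

lemma strict_total_trans: "strict_total r \<Longrightarrow> r a b \<Longrightarrow> r b c \<Longrightarrow> r a c"
  unfolding strict_total_def by blast

lemma strict_total_asym: "strict_total r \<Longrightarrow> r a b \<Longrightarrow> \<not> r b a"
  unfolding strict_total_def by blast

lemma strict_total_neq_cases: "strict_total r \<Longrightarrow> a \<noteq> b \<Longrightarrow> r a b \<or> r b a"
  unfolding strict_total_def by blast

lemma ctx_le_same_length_iff:
  assumes "length x = length y"
  shows "ctx_le co x y \<longleftrightarrow>
    x = y \<or> (\<exists>k < length x. take k x = take k y \<and> co (take k x) (x ! k) (y ! k))"
proof
  assume "ctx_le co x y"
  then consider (prefix) t where "y = x @ t"
    | (differ) \<alpha> a b \<beta> \<gamma> where "x = \<alpha> @ a # \<beta>" "y = \<alpha> @ b # \<gamma>" "co \<alpha> a b"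
    unfolding ctx_le_def by blast
  then show "x = y \<or> (\<exists>k < length x. take k x = take k y \<and> co (take k x) (x ! k) (y ! k))"
  proof cases
    case prefix
    then show ?thesis using assms by simp
  next
    case differ
    then show ?thesis by (intro disjI2 exI[of _ "length \<alpha>"]) auto
  qed
next
  assume "x = y \<or> (\<exists>k < length x. take k x = take k y \<and> co (take k x) (x ! k) (y ! k))"
  then show "ctx_le co x y"
  proof
    assume "\<exists>k < length x. take k x = take k y \<and> co (take k x) (x ! k) (y ! k)"
    then obtain k where k: "k < length x" "take k x = take k y" "co (take k x) (x ! k) (y ! k)"
      by blast
    have "x = take k x @ x ! k # drop (Suc k) x" "y = take k x @ y ! k # drop (Suc k) y"
      using k assms by (metis id_take_nth_drop)+
    then show ?thesis unfolding ctx_le_def using k(3) by blast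
  qed (auto simp: ctx_le_def)
qed

lemma ctx_le_antisym:
  assumes "contextual_order co" "length x = length y" "ctx_le co x y" "ctx_le co y x"
  shows "x = y"
proof (rule ccontr)
  assume "x \<noteq> y"
  then obtain k k' where
    k: "k < length x" "take k x = take k y" "co (take k x) (x ! k) (y ! k)" and
    k': "k' < length x" "take k' x = take k' y" "co (take k' x) (y ! k') (x ! k')"
    using assms ctx_le_same_length_iff by (metis (no_types, lifting))
  have "x ! k \<noteq> y ! k" "x ! k' \<noteq> y ! k'"
    using k(3) k'(3) assms(1) strict_total_irrefl unfolding contextual_order_def by metis+
  then have "k = k'"
    using k(2) k'(2) by (metis nat_neq_iff nth_take)
  then show False
    using k(3) k'(3) assms(1) strict_total_asym unfolding contextual_order_def by metis
qed

lemma take_eq_less: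
  assumes "take k' x = take k' y" "k < k'"
  shows "take k x = take k y" "x ! k = y ! k"
proof -
  show "take k x = take k y"
    using arg_cong[OF assms(1), of "take k"] assms(2) by simp
  show "x ! k = y ! k"
    using arg_cong[OF assms(1), of "\<lambda>xs. xs ! k"] assms(2) by simp
qed

lemma ctx_le_trans:
  assumes co: "contextual_order co" and l: "length x = length y" "length y = length z"
    and xy: "ctx_le co x y" and yz: "ctx_le co y z"
  shows "ctx_le co x z"
proof (cases "x = y \<or> y = z")
  case False
  obtain k where k: "k < length x" "take k x = take k y" "co (take k x) (x ! k) (y ! k)"
    using xy False ctx_le_same_length_iff[OF l(1)] by blast
  obtain k' where k': "k' < length y" "take k' y = take k' z" "co (take k' y) (y ! k') (z ! k')"
    using yz False ctx_le_same_length_iff[OF l(2)] by blast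
  have "\<exists>j < length x. take j x = take j z \<and> co (take j x) (x ! j) (z ! j)"
  proof (cases k k' rule: linorder_cases)
    case less
    then show ?thesis using k take_eq_less[OF k'(2) less] by (intro exI[of _ k]) simp
  next
    case equal
    have "co (take k x) (y ! k) (z ! k)" "take k x = take k z"
      using k(2) k'(2,3)[folded equal] by simp_all
    moreover have "strict_total (co (take k x))"
      using co unfolding contextual_order_def by blast
    ultimately show ?thesis
      using k strict_total_trans[of "co (take k x)"] by (intro exI[of _ k]) blast
  next
    case greater
    then show ?thesis using k' l take_eq_less[OF k(2) greater] by (intro exI[of _ k']) simp
  qed
  then show ?thesis
    using ctx_le_same_length_iff[of x z] l by simp
qed (use xy yz in auto)

lemma ctx_le_total:
  assumes co: "contextual_order co" and l: "length x = length y"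
  shows "ctx_le co x y \<or> ctx_le co y x"
proof (cases "x = y")
  case False
  have ex: "\<exists>k < length x. x ! k \<noteq> y ! k"
  proof (rule ccontr)
    assume "\<not> (\<exists>k < length x. x ! k \<noteq> y ! k)"
    then have "x = y"
      using l by (intro nth_equalityI) auto
    with False show False ..
  qed
  define k where "k = (LEAST k. k < length x \<and> x ! k \<noteq> y ! k)"
  have k: "k < length x" "x ! k \<noteq> y ! k"
    unfolding k_def using LeastI_ex[OF ex] by auto
  have "x ! i = y ! i" if "i < k" for i
    using not_less_Least[of i "\<lambda>k. k < length x \<and> x ! k \<noteq> y ! k"] that k(1)
    unfolding k_def by auto
  then have take_k: "take k x = take k y"
    using k(1) l by (intro nth_take_lemma) auto
  have "co (take k x) (x ! k) (y ! k) \<or> co (take k y) (y ! k) (x ! k)"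
    using strict_total_neq_cases[OF _ k(2), of "co (take k x)"] co take_k
    unfolding contextual_order_def by simp
  then show ?thesis
    using k l take_k ctx_le_same_length_iff[OF l] ctx_le_same_length_iff[OF l[symmetric]]
    by auto
qed (simp add: ctx_le_def)

lemma ex_ctx_le_minimal:
  assumes co: "contextual_order co" and "finite E" "E \<noteq> {}" "\<forall>x \<in> E. length x = m"
  shows "\<exists>z \<in> E. \<forall>x \<in> E. ctx_le co x z \<longrightarrow> x = z"
  using assms(2-)
proof (induction E rule: finite_ne_induct)
  case (insert x F)
  then obtain z where z: "z \<in> F" "\<forall>y \<in> F. ctx_le co y z \<longrightarrow> y = z"
    by auto
  show ?case
  proof (cases "ctx_le co x z")
    case True
    have "y = x" if "y \<in> F" "ctx_le co y x" for y
    proof -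
      have "ctx_le co y z"
        using ctx_le_trans[OF co _ _ that(2) True] that(1) z(1) insert.prems by simp
      then have "y = z"
        using z that(1) by blast
      then show ?thesis
        using ctx_le_antisym[OF co _ True] that(2) z(1) insert.prems by auto
    qed
    then show ?thesis by blast
  qed (use z in auto)
qed simp

section \<open>Trace equivalence\<close>

lemma swap_step_sym: "swap_step n Comp x y \<Longrightarrow> swap_step n Comp y x"
  unfolding swap_step_def indep_def by blast

lemma trace_eq_sym: "trace_eq n Comp x y \<Longrightarrow> trace_eq n Comp y x"
  unfolding trace_eq_def
  by (induction rule: rtranclp_induct) (auto intro: converse_rtranclp_into_rtranclp swap_step_sym)

lemma trace_eq_trans: "trace_eq n Comp x y \<Longrightarrow> trace_eq n Comp y z \<Longrightarrow> trace_eq n Comp x z"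
  unfolding trace_eq_def by (rule rtranclp_trans)

lemma trace_eq_length: "trace_eq n Comp x y \<Longrightarrow> length x = length y"
  unfolding trace_eq_def by (induction rule: rtranclp_induct) (auto simp: swap_step_def)

lemma swap_step_set: "swap_step n Comp x y \<Longrightarrow> set x = set y"
  unfolding swap_step_def by auto

lemma trace_eq_set: "trace_eq n Comp x y \<Longrightarrow> set x = set y"
  unfolding trace_eq_def by (induction rule: rtranclp_induct) (simp_all add: swap_step_set)

lemma finite_trace_class: "finite {x. trace_eq n Comp x w}"
proof (rule finite_subset)
  show "{x. trace_eq n Comp x w} \<subseteq> {x. set x \<subseteq> set w \<and> length x = length w}"
    using trace_eq_set trace_eq_length by blast
qed (simp add: finite_lists_length_eq)

lemma trace_eq_move_left:
  assumes "\<forall>b \<in> set x. indep n Comp a b"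
  shows "trace_eq n Comp (u @ x @ a # v) (u @ a # x @ v)"
  using assms
proof (induction x arbitrary: u)
  case (Cons b x)
  have "swap_step n Comp ((u @ [b]) @ a # x @ v) (u @ a # b # x @ v)"
    unfolding swap_step_def using Cons.prems
    by (intro exI[of _ u] exI[of _ b] exI[of _ a] exI[of _ "x @ v"]) (auto simp: indep_def)
  moreover have "trace_eq n Comp ((u @ [b]) @ x @ a # v) ((u @ [b]) @ a # x @ v)"
    using Cons.IH[of "u @ [b]"] Cons.prems by simp
  ultimately show ?case
    unfolding trace_eq_def by simp
qed (simp add: trace_eq_def)

locale component_partition =
  fixes n :: nat and Comp :: "nat \<Rightarrow> 'a set"
  assumes components_disjoint: "\<forall>i<n. \<forall>j<n. i \<noteq> j \<longrightarrow> Comp i \<inter> Comp j = {}"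
    and components_cover: "(\<Union>i<n. Comp i) = UNIV"
begin

definition comp :: "'a \<Rightarrow> nat" where
  "comp a = (SOME i. i < n \<and> a \<in> Comp i)"

lemma comp_less: "comp a < n" and in_Comp_comp: "a \<in> Comp (comp a)"
proof -
  have "\<exists>i. i < n \<and> a \<in> Comp i"
    using components_cover by blast
  then show "comp a < n" "a \<in> Comp (comp a)"
    unfolding comp_def by (metis (mono_tags, lifting) someI_ex)+
qed

lemma comp_eqI: "i < n \<Longrightarrow> a \<in> Comp i \<Longrightarrow> comp a = i"
  using comp_less in_Comp_comp components_disjoint by blast

lemma in_Comp_iff: "i < n \<Longrightarrow> a \<in> Comp i \<longleftrightarrow> comp a = i"
  using comp_eqI in_Comp_comp by blast

lemma indep_iff: "indep n Comp a b \<longleftrightarrow> comp a \<noteq> comp b"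
proof
  show "indep n Comp a b \<Longrightarrow> comp a \<noteq> comp b"
    unfolding indep_def using comp_eqI by blast
  show "comp a \<noteq> comp b \<Longrightarrow> indep n Comp a b"
    unfolding indep_def using comp_less in_Comp_comp by blast
qed

lemma proj_trace_eq:
  assumes "trace_eq n Comp x y" "i < n"
  shows "proj (Comp i) x = proj (Comp i) y"
  using assms(1) unfolding trace_eq_def
proof (induction rule: rtranclp_induct)
  case (step y z)
  then show ?case
    using assms(2) by (auto simp: swap_step_def indep_iff in_Comp_iff proj_def)
qed simp

lemma shuffle_trace_eq: "trace_eq n Comp u w \<Longrightarrow> w \<in> shuffle n Comp P \<Longrightarrow> u \<in> shuffle n Comp P"
  using proj_trace_eq unfolding shuffle_def by auto

end

section \<open>Visibly pushdown automata\<close>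

lemma vpa_run_snoc:
  "vpa_run C R dc dr di cfg (w @ [a]) = vpa_step C R dc dr di (vpa_run C R dc dr di cfg w) a"
  by (simp add: vpa_run_def)

lemma vpa_run_closed:
  assumes "q0 \<in> Q"
    and "\<forall>q\<in>Q. \<forall>a. fst (dc q a) \<in> Q \<and> snd (dc q a) \<in> \<Gamma>"
    and "\<forall>q\<in>Q. \<forall>a. dr q None a \<in> Q \<and> (\<forall>g\<in>\<Gamma>. dr q (Some g) a \<in> Q)"
    and "\<forall>q\<in>Q. \<forall>a. di q a \<in> Q"
  shows "fst (vpa_run C R dc dr di (q0, []) w) \<in> Q \<and> set (snd (vpa_run C R dc dr di (q0, []) w)) \<subseteq> \<Gamma>"
proof (induction w rule: rev_induct)
  case (snoc a w)
  then show ?case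
    using assms(2-) unfolding vpa_run_snoc
    by (cases "vpa_run C R dc dr di (q0, []) w"; cases "snd (vpa_run C R dc dr di (q0, []) w)")
      (auto simp: vpa_step_def Let_def)
qed (simp add: vpa_run_def assms(1))

lemma vp_order_contextual_order:
  assumes "vp_order C R ord"
  shows "contextual_order ord"
proof -
  obtain Q \<Gamma> q0 dc dr di f where
    run_closed: "q0 \<in> Q" "\<forall>q\<in>Q. \<forall>a. fst (dc q a) \<in> Q \<and> snd (dc q a) \<in> \<Gamma>"
      "\<forall>q\<in>Q. \<forall>a. dr q None a \<in> Q \<and> (\<forall>g\<in>\<Gamma>. dr q (Some g) a \<in> Q)"
      "\<forall>q\<in>Q. \<forall>a. di q a \<in> Q" and
    total: "\<forall>q\<in>Q. strict_total (f q)" and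
    ord: "\<forall>w. ord w = f (fst (vpa_run C R dc dr di (q0, []) w))"
    using assms unfolding vp_order_def by blast
  show ?thesis
    unfolding contextual_order_def using vpa_run_closed[OF run_closed] total ord by simp
qed

(* The product automaton keeps the label of the topmost pending call in its control state and,
   in each stack symbol, the label of the call beneath it; pairs are packed into the nat states
   and stack symbols by prod_encode. *)
definition product_call :: "('a \<Rightarrow> nat) \<Rightarrow> (nat \<Rightarrow> 'a \<Rightarrow> nat \<times> nat) \<Rightarrow> nat \<Rightarrow> 'a \<Rightarrow> nat \<times> nat" where
  "product_call lab dc s a =
    (let (q, t) = prod_decode s in (prod_encode (fst (dc q a), lab a), prod_encode (snd (dc q a), t)))"

definition product_return :: "nat \<Rightarrow> (nat \<Rightarrow> nat option \<Rightarrow> 'a \<Rightarrow> nat) \<Rightarrow> nat \<Rightarrow> nat option \<Rightarrow> 'a \<Rightarrow> nat" where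
  "product_return d dr s g a =
    (let q = fst (prod_decode s) in
     case g of
       None \<Rightarrow> prod_encode (dr q None a, d)
     | Some \<gamma> \<Rightarrow> (let (\<gamma>', t) = prod_decode \<gamma> in prod_encode (dr q (Some \<gamma>') a, t)))"

definition product_internal :: "(nat \<Rightarrow> 'a \<Rightarrow> nat) \<Rightarrow> nat \<Rightarrow> 'a \<Rightarrow> nat" where
  "product_internal di s a = (let (q, t) = prod_decode s in prod_encode (di q a, t))"

section \<open>Heights, matching and pending calls\<close>

lemma sorted_wrt_greater_eqI:
  fixes xs ys :: "'a::linorder list"
  assumes "sorted_wrt (>) xs" "sorted_wrt (>) ys" "set xs = set ys"
  shows "xs = ys"
  using strict_sorted_equal[of "rev xs" "rev ys"] assms by (simp add: sorted_wrt_rev)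

locale vp_alphabet =
  fixes C R :: "'a set"
  assumes calls_returns_disjoint: "C \<inter> R = {}"
begin

definition weight :: "'a \<Rightarrow> int" where
  "weight a = (if a \<in> C then 1 else if a \<in> R then -1 else 0)"

definition height :: "'a list \<Rightarrow> int" where
  "height w = sum_list (map weight w)"

lemma height_Nil [simp]: "height [] = 0"
  and height_Cons [simp]: "height (a # w) = weight a + height w"
  and height_append [simp]: "height (u @ v) = height u + height v"
  by (simp_all add: height_def)

lemma height_take_Suc: "m < length w \<Longrightarrow> height (take (Suc m) w) = height (take m w) + weight (w ! m)"
  by (simp add: take_Suc_conv_app_nth)

lemma weight_call [simp]: "a \<in> C \<Longrightarrow> weight a = 1"
  and weight_return [simp]: "a \<in> R \<Longrightarrow> weight a = -1"
  and weight_internal [simp]: "a \<notin> C \<Longrightarrow> a \<notin> R \<Longrightarrow> weight a = 0"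
  using calls_returns_disjoint by (auto simp: weight_def)

lemma weight_cases:
  obtains "a \<in> C" "weight a = 1" | "a \<in> R" "weight a = -1" | "a \<notin> C" "a \<notin> R" "weight a = 0"
  by (cases "a \<in> C"; cases "a \<in> R") simp_all

definition balanced :: "'a list \<Rightarrow> bool" where
  "balanced w \<longleftrightarrow> height w = 0 \<and> (\<forall>m. 0 \<le> height (take m w))"

lemma wm_imp_balanced: "wm C R w \<Longrightarrow> balanced w"
proof (induction rule: wm.induct)
  case (wm_int a)
  then show ?case by (simp add: balanced_def take_Cons')
next
  case (wm_nest c r u)
  have "0 \<le> height (take m ([c] @ u @ [r]))" for m
    using wm_nest by (cases m; cases "m \<le> Suc (length u)") (auto simp: balanced_def take_Cons')
  then show ?case
    using wm_nest by (simp add: balanced_def)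
next
  case (wm_app u v)
  have "0 \<le> height (take m (u @ v))" for m
    using wm_app by (cases "m \<le> length u") (auto simp: balanced_def)
  then show ?case
    using wm_app by (simp add: balanced_def)
qed (simp add: balanced_def)

lemma balanced_Cons_call_split:
  assumes "balanced (c # w)" "c \<in> C"
  obtains x r y where "w = x @ r # y" "r \<in> R" "balanced x" "balanced y"
proof -
  have hw: "height w = -1"
    using assms by (simp add: balanced_def)
  have prefixes: "-1 \<le> height (take m w)" for m
  proof -
    have "0 \<le> height (take (Suc m) (c # w))"
      using assms(1) unfolding balanced_def by blast
    then show ?thesis
      using assms(2) by simp
  qed
  (* The return matching c ends the shortest prefix of w of negative height. *)
  define m where "m = (LEAST m. height (take m w) < 0)"
  have m: "height (take m w) < 0"
    unfolding m_def by (rule LeastI[of _ "length w"]) (simp add: hw)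
  have "m \<le> length w"
    unfolding m_def by (rule Least_le) (simp add: hw)
  have before: "0 \<le> height (take k w)" if "k < m" for k
    using not_less_Least[OF that[unfolded m_def]] by simp
  obtain j where "m = Suc j"
    using m by (cases m) auto
  then have "j < length w" "0 \<le> height (take j w)" and j: "height (take (Suc j) w) < 0"
    using \<open>m \<le> length w\<close> before m by auto
  then have r: "w ! j \<in> R" and hj: "height (take j w) = 0"
    using j height_take_Suc[OF \<open>j < length w\<close>] by (cases "w ! j" rule: weight_cases; simp)+
  have "w = take j w @ w ! j # drop (Suc j) w"
    using \<open>j < length w\<close> by (rule id_take_nth_drop)
  moreover have "balanced (take j w)"
    using hj before \<open>m = Suc j\<close> by (auto simp: balanced_def min_def)
  moreover have "balanced (drop (Suc j) w)"
  proof -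
    have "height (take (Suc j + m) w) = -1 + height (take m (drop (Suc j) w))" for m
      using hj height_take_Suc[OF \<open>j < length w\<close>] r take_add[of "Suc j" m w] by simp
    moreover have "height w = height (take (Suc j) w) + height (drop (Suc j) w)"
      by (metis append_take_drop_id height_append)
    ultimately have "height (drop (Suc j) w) = 0" "0 \<le> height (take m (drop (Suc j) w))" for m
      using prefixes[of "Suc j + m"] hw hj height_take_Suc[OF \<open>j < length w\<close>] r by simp_all
    then show ?thesis
      by (simp add: balanced_def)
  qed
  ultimately show ?thesis
    using r that by blast
qed

lemma balanced_imp_wm: "balanced w \<Longrightarrow> wm C R w"
proof (induction "length w" arbitrary: w rule: less_induct)
  case less
  show ?case
  proof (cases w)
    case (Cons a w')
    show ?thesis
    proof (cases a rule: weight_cases)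
      case 1
      then obtain x r y where w': "w' = x @ r # y" "r \<in> R" "balanced x" "balanced y"
        using balanced_Cons_call_split less.prems Cons by blast
      then have "wm C R x" "wm C R y"
        using less.hyps Cons by auto
      then have "wm C R (([a] @ x @ [r]) @ y)"
        using 1 w' by (intro wm_app wm_nest)
      then show ?thesis
        using Cons w' by simp
    next
      case 2
      have "0 \<le> height (take 1 w)"
        using less.prems unfolding balanced_def by blast
      then show ?thesis
        using 2 Cons by simp
    next
      case 3
      have "0 \<le> height (take (Suc m) w)" for m
        using less.prems unfolding balanced_def by blast
      then have "balanced w'"
        using less.prems 3 Cons by (simp add: balanced_def)
      then have "wm C R ([a] @ w')"
        using less.hyps 3 Cons by (intro wm_app wm_int) auto
      then show ?thesis
        using Cons by simp
    qed
  qed (simp add: wm_nil)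
qed

lemma wm_iff_balanced: "wm C R w \<longleftrightarrow> balanced w"
  using wm_imp_balanced balanced_imp_wm by blast

lemma balanced_factor_iff:
  assumes "i < j" "j \<le> length w"
  shows "balanced (take (j - Suc i) (drop (Suc i) w)) \<longleftrightarrow>
    height (take j w) = height (take (Suc i) w) \<and>
    (\<forall>m. Suc i \<le> m \<and> m \<le> j \<longrightarrow> height (take (Suc i) w) \<le> height (take m w))"
proof -
  define f where "f = take (j - Suc i) (drop (Suc i) w)"
  have prefix: "height (take k f) = height (take (Suc i + k) w) - height (take (Suc i) w)"
    if "k \<le> j - Suc i" for k
    using that take_add[of "Suc i" k w] unfolding f_def by (simp add: min_def)
  have "length f = j - Suc i"
    using assms unfolding f_def by simp
  have height_f: "height f = height (take j w) - height (take (Suc i) w)"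
    using prefix[of "j - Suc i"] \<open>length f = j - Suc i\<close> assms by simp
  have "(\<forall>k. 0 \<le> height (take k f)) \<longleftrightarrow> (\<forall>k \<le> j - Suc i. 0 \<le> height (take k f))"
    if "height f = 0"
  proof (intro iffI allI)
    fix k
    assume "\<forall>k \<le> j - Suc i. 0 \<le> height (take k f)"
    then show "0 \<le> height (take k f)"
      using that \<open>length f = j - Suc i\<close> by (cases "k \<le> j - Suc i") auto
  qed simp
  moreover have "(\<forall>k \<le> j - Suc i. 0 \<le> height (take k f)) \<longleftrightarrow>
    (\<forall>m. Suc i \<le> m \<and> m \<le> j \<longrightarrow> height (take (Suc i) w) \<le> height (take m w))"
  proof safe
    fix m
    assume "\<forall>k \<le> j - Suc i. 0 \<le> height (take k f)" "Suc i \<le> m" "m \<le> j"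
    moreover have "m - Suc i \<le> j - Suc i"
      using \<open>m \<le> j\<close> by simp
    ultimately show "height (take (Suc i) w) \<le> height (take m w)"
      using prefix[of "m - Suc i"] by fastforce
  next
    fix k
    assume "\<forall>m. Suc i \<le> m \<and> m \<le> j \<longrightarrow> height (take (Suc i) w) \<le> height (take m w)"
      "k \<le> j - Suc i"
    moreover have "Suc i \<le> Suc i + k" "Suc i + k \<le> j"
      using \<open>k \<le> j - Suc i\<close> assms(1) by simp_all
    ultimately show "0 \<le> height (take k f)"
      using prefix[of k] by (metis diff_ge_0_iff_ge)
  qed
  ultimately show ?thesis
    unfolding f_def[symmetric] balanced_def height_f by auto
qed

lemma matched_iff_heights:
  "matched C R w i j \<longleftrightarrow> i < j \<and> j < length w \<and> w ! i \<in> C \<and> w ! j \<in> R \<and>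
    height (take j w) = height (take (Suc i) w) \<and>
    (\<forall>m. Suc i \<le> m \<and> m \<le> j \<longrightarrow> height (take (Suc i) w) \<le> height (take m w))"
  unfolding matched_def wm_iff_balanced using balanced_factor_iff by fastforce

lemma matched_height_drop:
  assumes "matched C R w i j"
  shows "height (take (Suc j) w) = height (take (Suc i) w) - 1"
  using assms height_take_Suc[of j w] unfolding matched_iff_heights by simp

lemma pending_call_iff_heights:
  "pending_call C R w i \<longleftrightarrow> i < length w \<and> w ! i \<in> C \<and>
    (\<forall>m. i < m \<and> m \<le> length w \<longrightarrow> height (take (Suc i) w) \<le> height (take m w))"
    (is "_ \<longleftrightarrow> _ \<and> _ \<and> (\<forall>m. ?stays_above m)")
proof
  assume pending: "pending_call C R w i"
  show "i < length w \<and> w ! i \<in> C \<and> (\<forall>m. ?stays_above m)"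
  proof (intro conjI allI)
    show "i < length w" "w ! i \<in> C"
      using pending by (simp_all add: pending_call_def)
    fix m0
    show "?stays_above m0"
    proof (rule ccontr)
      assume "\<not> ?stays_above m0"
      define m where "m = (LEAST m. \<not> ?stays_above m)"
      have m: "i < m" "m \<le> length w" "height (take m w) < height (take (Suc i) w)"
        using LeastI[of "\<lambda>m. \<not> ?stays_above m", OF \<open>\<not> ?stays_above m0\<close>] unfolding m_def by auto
      have before: "?stays_above k" if "k < m" for k
        using not_less_Least[OF that[unfolded m_def]] by blast
      have "m \<noteq> Suc i"
        using m(3) by auto
      then obtain j where j: "m = Suc j" "Suc i \<le> j"
        using m(1) by (cases m) auto
      then have "j < length w" "height (take (Suc i) w) \<le> height (take j w)"
        using m before[of j] by auto
      then have "w ! j \<in> R" "height (take j w) = height (take (Suc i) w)"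
        using m j height_take_Suc[of j w] by (cases "w ! j" rule: weight_cases; simp)+
      then have "matched C R w i j"
        unfolding matched_iff_heights
        using j \<open>j < length w\<close> \<open>w ! i \<in> C\<close> before by (auto simp: less_Suc_eq_le)
      then show False
        using pending by (simp add: pending_call_def)
    qed
  qed
next
  assume heights: "i < length w \<and> w ! i \<in> C \<and> (\<forall>m. ?stays_above m)"
  have False if "matched C R w i j" for j
  proof -
    have "i < Suc j" "Suc j \<le> length w"
      using that by (simp_all add: matched_def)
    then show False
      using heights matched_height_drop[OF that] by fastforce
  qed
  then show "pending_call C R w i"
    using heights by (auto simp: pending_call_def)
qed

lemma ex_pending_call_after:
  assumes "k \<le> length w" "height (take k w) < height w"
  shows "\<exists>p \<ge> k. pending_call C R w p"
proof -
  define p where "p = (GREATEST p. p \<le> length w \<and> height (take p w) \<le> height (take k w))"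
  have p: "p \<le> length w \<and> height (take p w) \<le> height (take k w)"
    unfolding p_def by (rule GreatestI_nat[of _ k "length w"]) (use assms(1) in auto)
  have "k \<le> p"
    unfolding p_def by (rule Greatest_le_nat[of _ k "length w"]) (use assms(1) in auto)
  have above: "height (take k w) < height (take m w)" if "p < m" "m \<le> length w" for m
  proof (rule ccontr)
    assume "\<not> height (take k w) < height (take m w)"
    then have "m \<le> p"
      unfolding p_def using that(2) by (intro Greatest_le_nat[of _ m "length w"]) auto
    with that(1) show False
      by simp
  qed
  have "p < length w"
    using p assms(2) by (cases "p = length w") auto
  then have "w ! p \<in> C"
    using above[of "Suc p"] p height_take_Suc[of p w]
    by (cases "w ! p" rule: weight_cases) auto
  then have "pending_call C R w p"
    unfolding pending_call_iff_heights
    using \<open>p < length w\<close> above p height_take_Suc[of p w] by fastforce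
  then show ?thesis
    using \<open>k \<le> p\<close> by blast
qed

lemma well_matched_imp_balanced:
  assumes "well_matched C R w"
  shows "balanced w"
proof -
  have nonneg: "0 \<le> height (take m w)" for m
  proof (rule ccontr)
    assume "\<not> 0 \<le> height (take m w)"
    define m0 where "m0 = (LEAST m. height (take m w) < 0)"
    have m0: "height (take m0 w) < 0"
      unfolding m0_def by (rule LeastI[of _ m]) (use \<open>\<not> 0 \<le> _\<close> in simp)
    have before: "0 \<le> height (take k w)" if "k < m0" for k
      using not_less_Least[OF that[unfolded m0_def]] by simp
    obtain j where j: "m0 = Suc j"
      using m0 by (cases m0) auto
    have "j < length w"
      using before[of j] m0 j by (cases "j < length w") auto
    then have "w ! j \<in> R"
      using m0 j before[of j] height_take_Suc[of j w] by (cases "w ! j" rule: weight_cases) auto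
    then obtain i where i: "matched C R w i j"
      using assms \<open>j < length w\<close> unfolding well_matched_def pending_ret_def by blast
    then have "i < j" "j < length w" "w ! i \<in> C"
      by (simp_all add: matched_def)
    then have "height (take (Suc i) w) = height (take i w) + 1"
      using height_take_Suc[of i w] by simp
    then show False
      using matched_height_drop[OF i] before[of i] m0 j \<open>i < j\<close> by simp
  qed
  have "\<not> 0 < height w"
    using ex_pending_call_after[of 0 w] assms by (auto simp: well_matched_def)
  then show ?thesis
    using nonneg[of "length w"] nonneg by (simp add: balanced_def)
qed

lemma matched_shift:
  assumes "matched C R y i j"
  shows "matched C R (x @ y @ z) (length x + i) (length x + j)"
proof -
  have "i < j" "j < length y"
    using assms by (simp_all add: matched_def)
  then have "take (j - Suc i) (drop (Suc (length x + i)) (x @ y @ z)) = take (j - Suc i) (drop (Suc i) y)"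
    by simp
  then show ?thesis
    using assms \<open>i < j\<close> \<open>j < length y\<close> unfolding matched_def by (simp add: nth_append)
qed

lemma matched_append_iff:
  assumes "j < length u"
  shows "matched C R (u @ v) i j \<longleftrightarrow> matched C R u i j"
proof
  assume "matched C R (u @ v) i j"
  moreover have "take (j - Suc i) (drop (Suc i) (u @ v)) = take (j - Suc i) (drop (Suc i) u)" if "i < j"
    using assms that by simp
  ultimately show "matched C R u i j"
    using assms unfolding matched_def by (auto simp: nth_append)
qed (use matched_shift[of u i j "[]" v] in simp)

definition pending_stack :: "'a list \<Rightarrow> nat list" where
  "pending_stack w = rev (filter (pending_call C R w) [0..<length w])"

lemma set_pending_stack: "set (pending_stack w) = {p. pending_call C R w p}"
  by (auto simp: pending_stack_def pending_call_def)

lemma sorted_pending_stack: "sorted_wrt (>) (pending_stack w)"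
  by (simp add: pending_stack_def sorted_wrt_rev sorted_wrt_filter)

lemma pending_stack_eq_Nil_iff: "pending_stack w = [] \<longleftrightarrow> (\<forall>p. \<not> pending_call C R w p)"
  using set_pending_stack[of w] by auto

lemma pending_stack_ConsD:
  assumes "pending_stack w = p # ps"
  shows "pending_call C R w p" "pending_call C R w k \<Longrightarrow> k \<le> p"
  using set_pending_stack[of w] sorted_pending_stack[of w] assms by fastforce+

lemma Greatest_pending_call: "pending_stack w = p # ps \<Longrightarrow> (GREATEST k. pending_call C R w k) = p"
  using pending_stack_ConsD by (blast intro: Greatest_equality)

lemma height_top_pending_call:
  assumes "pending_stack w = p # ps"
  shows "height w = height (take (Suc p) w)"
proof -
  have "p < length w" "height (take (Suc p) w) \<le> height w"
    using pending_stack_ConsD(1)[OF assms] unfolding pending_call_iff_heights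
    by (metis order.refl take_all)+
  moreover have "\<not> height (take (Suc p) w) < height w"
    using ex_pending_call_after[of "Suc p" w] pending_stack_ConsD(2)[OF assms] \<open>p < length w\<close>
    by fastforce
  ultimately show ?thesis
    by simp
qed

lemma matched_top_pending_call:
  assumes "pending_stack w = p # ps" "r \<in> R"
  shows "matched C R (w @ r # v) p (length w)"
proof -
  have "pending_call C R w p"
    using pending_stack_ConsD(1)[OF assms(1)] .
  then have "p < length w" "w ! p \<in> C"
    "\<And>m. p < m \<Longrightarrow> m \<le> length w \<Longrightarrow> height (take (Suc p) w) \<le> height (take m w)"
    unfolding pending_call_iff_heights by auto
  then show ?thesis
    unfolding matched_iff_heights
    using height_top_pending_call[OF assms(1)] assms(2) by (auto simp: nth_append)
qed

lemma matched_imp_top_pending_call: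
  assumes "matched C R w p q"
  shows "\<exists>ps. pending_stack (take q w) = p # ps"
proof -
  have heights: "p < q" "q < length w" "w ! p \<in> C" "height (take q w) = height (take (Suc p) w)"
    "\<And>m. Suc p \<le> m \<Longrightarrow> m \<le> q \<Longrightarrow> height (take (Suc p) w) \<le> height (take m w)"
    using assms unfolding matched_iff_heights by auto
  have pending_p: "pending_call C R (take q w) p"
    unfolding pending_call_iff_heights using heights by (auto simp: min_def)
  have "k \<le> p" if "pending_call C R (take q w) k" for k
  proof (rule ccontr)
    assume "\<not> k \<le> p"
    moreover have "k < q" "w ! k \<in> C"
      "height (take (Suc k) w) \<le> height (take q w)"
      using that heights(2) unfolding pending_call_iff_heights by (auto simp: min_def)
    ultimately show False
      using heights(4) heights(5)[of k] height_take_Suc[of k w] heights(2) by simp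
  qed
  moreover obtain p' ps where "pending_stack (take q w) = p' # ps"
    using pending_p pending_stack_eq_Nil_iff by (cases "pending_stack (take q w)") auto
  ultimately show ?thesis
    using pending_stack_ConsD pending_p by (metis le_antisym)
qed

lemma matched_snoc_last_iff:
  "matched C R (w @ [a]) k (length w) \<longleftrightarrow> a \<in> R \<and> (\<exists>ps. pending_stack w = k # ps)"
proof
  assume "matched C R (w @ [a]) k (length w)"
  then show "a \<in> R \<and> (\<exists>ps. pending_stack w = k # ps)"
    using matched_imp_top_pending_call[of "w @ [a]" k "length w"] by (simp add: matched_def)
qed (use matched_top_pending_call[of w k _ a "[]"] in auto)

lemma ex_matched_snoc_iff:
  "(\<exists>j. matched C R (w @ [a]) k j) \<longleftrightarrow>
    (\<exists>j. matched C R w k j) \<or> matched C R (w @ [a]) k (length w)"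
proof
  assume "\<exists>j. matched C R (w @ [a]) k j"
  then obtain j where j: "matched C R (w @ [a]) k j" ..
  then have "j < length w \<or> j = length w"
    by (auto simp: matched_def)
  then show "(\<exists>j. matched C R w k j) \<or> matched C R (w @ [a]) k (length w)"
    using j matched_append_iff by blast
next
  assume "(\<exists>j. matched C R w k j) \<or> matched C R (w @ [a]) k (length w)"
  moreover have "matched C R (w @ [a]) k j" if "matched C R w k j" for j
    using that matched_append_iff[of j w "[a]" k] by (simp add: matched_def)
  ultimately show "\<exists>j. matched C R (w @ [a]) k j"
    by blast
qed

lemma pending_call_snoc_iff:
  "pending_call C R (w @ [a]) k \<longleftrightarrow>
    k = length w \<and> a \<in> C \<or>
    k < length w \<and> pending_call C R w k \<and> \<not> (a \<in> R \<and> (\<exists>ps. pending_stack w = k # ps))"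
proof (cases k "length w" rule: linorder_cases)
  case less
  then show ?thesis
    unfolding pending_call_def ex_matched_snoc_iff matched_snoc_last_iff by (auto simp: nth_append)
next
  case equal
  then show ?thesis
    by (auto simp: pending_call_def matched_def)
qed (simp add: pending_call_def)

lemma pending_stack_snoc:
  "pending_stack (w @ [a]) =
    (if a \<in> C then length w # pending_stack w
     else if a \<in> R then tl (pending_stack w) else pending_stack w)"
proof (rule sorted_wrt_greater_eqI)
  show "sorted_wrt (>) (pending_stack (w @ [a]))"
    by (rule sorted_pending_stack)
  have "p < length w" if "p \<in> set (pending_stack w)" for p
    using that by (simp add: set_pending_stack pending_call_def)
  then show "sorted_wrt (>) (if a \<in> C then length w # pending_stack w
     else if a \<in> R then tl (pending_stack w) else pending_stack w)"
    using sorted_pending_stack[of w] by (cases "pending_stack w") auto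
  have "k \<in> set (pending_stack (w @ [a])) \<longleftrightarrow>
    k = length w \<and> a \<in> C \<or> k \<in> set (pending_stack w) \<and> \<not> (a \<in> R \<and> (\<exists>ps. pending_stack w = k # ps))"
    for k
    unfolding set_pending_stack pending_call_snoc_iff by (auto simp: pending_call_def)
  then show "set (pending_stack (w @ [a])) = set (if a \<in> C then length w # pending_stack w
     else if a \<in> R then tl (pending_stack w) else pending_stack w)"
    using sorted_pending_stack[of w] calls_returns_disjoint
    by (intro set_eqI) (cases "pending_stack w"; auto)
qed

definition pending_labels :: "('a \<Rightarrow> nat) \<Rightarrow> 'a list \<Rightarrow> nat list" where
  "pending_labels lab w = map (\<lambda>p. lab (w ! p)) (pending_stack w)"

definition top_label :: "('a \<Rightarrow> nat) \<Rightarrow> nat \<Rightarrow> 'a list \<Rightarrow> nat" where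
  "top_label lab d w = hd (pending_labels lab w @ [d])"

lemma top_label_pending_stack_Cons:
  "pending_stack w = p # ps \<Longrightarrow> top_label lab d w = lab (w ! p)"
  by (simp add: top_label_def pending_labels_def)

lemma top_label_pending_stack_Nil: "pending_stack w = [] \<Longrightarrow> top_label lab d w = d"
  by (simp add: top_label_def pending_labels_def)

lemma length_pending_labels [simp]: "length (pending_labels lab w) = length (pending_stack w)"
  by (simp add: pending_labels_def)

lemma pending_labels_snoc:
  "pending_labels lab (w @ [a]) =
    (if a \<in> C then lab a # pending_labels lab w
     else if a \<in> R then tl (pending_labels lab w) else pending_labels lab w)"
proof -
  have "(w @ [a]) ! p = w ! p" if "p \<in> set (pending_stack w)" for p
    using that by (simp add: set_pending_stack pending_call_def nth_append)
  then show ?thesis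
    unfolding pending_labels_def pending_stack_snoc by (simp add: map_tl cong: map_cong)
qed

lemma vpa_run_product:
  fixes lab :: "'a \<Rightarrow> nat" and d :: nat
  defines "ls w \<equiv> pending_labels lab w @ [d]"
  shows "vpa_run C R (product_call lab dc) (product_return d dr) (product_internal di) (prod_encode (q0, d), []) w =
      (prod_encode (fst (vpa_run C R dc dr di (q0, []) w), hd (ls w)),
       map prod_encode (zip (snd (vpa_run C R dc dr di (q0, []) w)) (tl (ls w)))) \<and>
    length (snd (vpa_run C R dc dr di (q0, []) w)) = length (pending_stack w)"
proof (induction w rule: rev_induct)
  case Nil
  then show ?case
    by (simp add: vpa_run_def ls_def pending_labels_def pending_stack_def)
next
  case (snoc a w)
  obtain q st where run: "vpa_run C R dc dr di (q0, []) w = (q, st)"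
    by fastforce
  obtain t ts where ls: "ls w = t # ts"
    unfolding ls_def by (cases "pending_labels lab w") auto
  have not_both: "a \<notin> C \<or> a \<notin> R"
    using calls_returns_disjoint by blast
  consider (call) "a \<in> C" | (internal) "a \<notin> C" "a \<notin> R" | (return_bottom) "a \<in> R" "st = []"
    | (return) g st' where "a \<in> R" "st = g # st'"
    by (cases st) auto
  then show ?case
  proof cases
    case call
    then show ?thesis
      using snoc run ls not_both
      by (auto simp: vpa_run_snoc vpa_step_def product_call_def ls_def pending_labels_snoc pending_stack_snoc)
  next
    case internal
    then show ?thesis
      using snoc run ls
      by (auto simp: vpa_run_snoc vpa_step_def product_internal_def ls_def pending_labels_snoc pending_stack_snoc)
  next
    case return_bottom
    then have "pending_labels lab w = []"
      using snoc run by (simp add: pending_labels_def)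
    then show ?thesis
      using snoc run return_bottom not_both
      by (simp add: vpa_run_snoc vpa_step_def product_return_def ls_def pending_labels_snoc pending_stack_snoc)
  next
    case return
    then obtain l ls' where "pending_labels lab w = l # ls'"
      using snoc run length_pending_labels[of lab w] by (cases "pending_labels lab w") auto
    moreover obtain l' ls'' where "ls' @ [d] = l' # ls''"
      by (cases "ls' @ [d]") auto
    ultimately show ?thesis
      using snoc run return not_both
      by (auto simp: vpa_run_snoc vpa_step_def product_return_def ls_def pending_labels_snoc
          pending_stack_snoc Let_def split: prod.split)
  qed
qed

lemma vp_order_modify_by_top_label:
  assumes "vp_order C R ord" "finite (range lab)"
    and "\<And>t r. strict_total r \<Longrightarrow> strict_total (g t r)"
  shows "vp_order C R (\<lambda>w. g (top_label lab d w) (ord w))"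
proof -
  obtain Q \<Gamma> q0 dc dr di f where
    finite: "finite Q" "finite \<Gamma>" and "q0 \<in> Q" and
    call: "\<forall>q\<in>Q. \<forall>a. fst (dc q a) \<in> Q \<and> snd (dc q a) \<in> \<Gamma>" and
    return: "\<forall>q\<in>Q. \<forall>a. dr q None a \<in> Q \<and> (\<forall>g\<in>\<Gamma>. dr q (Some g) a \<in> Q)" and
    internal: "\<forall>q\<in>Q. \<forall>a. di q a \<in> Q" and
    total: "\<forall>q\<in>Q. strict_total (f q)" and
    ord: "\<forall>w. ord w = f (fst (vpa_run C R dc dr di (q0, []) w))"
    using assms(1) unfolding vp_order_def by blast
  define L where "L = insert d (range lab)"
  define Q' where "Q' = prod_encode ` (Q \<times> L)"
  define \<Gamma>' where "\<Gamma>' = prod_encode ` (\<Gamma> \<times> L)"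
  define f' where "f' s = g (snd (prod_decode s)) (f (fst (prod_decode s)))" for s
  have "finite Q'" "finite \<Gamma>'"
    using finite assms(2) unfolding Q'_def \<Gamma>'_def L_def by simp_all
  moreover have "prod_encode (q0, d) \<in> Q'"
    using \<open>q0 \<in> Q\<close> unfolding Q'_def L_def by simp
  moreover have "\<forall>s\<in>Q'. \<forall>a. fst (product_call lab dc s a) \<in> Q' \<and> snd (product_call lab dc s a) \<in> \<Gamma>'"
    using call unfolding Q'_def \<Gamma>'_def L_def by (auto simp: product_call_def)
  moreover have "\<forall>s\<in>Q'. \<forall>a. product_return d dr s None a \<in> Q' \<and>
      (\<forall>\<gamma>\<in>\<Gamma>'. product_return d dr s (Some \<gamma>) a \<in> Q')"
    using return unfolding Q'_def \<Gamma>'_def L_def by (auto simp: product_return_def)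
  moreover have "\<forall>s\<in>Q'. \<forall>a. product_internal di s a \<in> Q'"
    using internal unfolding Q'_def L_def by (auto simp: product_internal_def)
  moreover have "\<forall>s\<in>Q'. strict_total (f' s)"
    using total assms(3) unfolding Q'_def f'_def by auto
  moreover have "\<forall>w. g (top_label lab d w) (ord w) =
      f' (fst (vpa_run C R (product_call lab dc) (product_return d dr) (product_internal di)
        (prod_encode (q0, d), []) w))"
    using ord vpa_run_product by (simp add: f'_def top_label_def)
  ultimately show ?thesis
    unfolding vp_order_def by blast
qed

end

section \<open>The coherent order\<close>

definition raise_to_top :: "('a \<Rightarrow> bool) \<Rightarrow> ('a \<Rightarrow> 'a \<Rightarrow> bool) \<Rightarrow> 'a \<Rightarrow> 'a \<Rightarrow> bool" where
  "raise_to_top P r a b = (if P a = P b then r a b else P b)"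

lemma strict_total_raise_to_top:
  assumes "strict_total r"
  shows "strict_total (raise_to_top P r)"
  unfolding strict_total_def
proof (intro conjI allI impI)
  fix a b c
  show "\<not> raise_to_top P r a a"
    using assms by (simp add: raise_to_top_def strict_total_def)
  show "raise_to_top P r a c" if "raise_to_top P r a b" "raise_to_top P r b c"
    using that strict_total_trans[OF assms, of a b c] unfolding raise_to_top_def
    by (cases "P a"; cases "P b"; cases "P c") auto
  show "raise_to_top P r a b \<or> raise_to_top P r b a" if "a \<noteq> b"
    using that assms strict_total_neq_cases[of r] unfolding raise_to_top_def
    by (cases "P a"; cases "P b") auto
qed

lemma raise_to_top_reverses:
  assumes "strict_total r" "raise_to_top P r a b" "r b a"
  shows "P b" "\<not> P a"
  using assms strict_total_asym unfolding raise_to_top_def by (metis (full_types))+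

locale partitioned_vp_alphabet = vp_alphabet C R + component_partition n Comp
  for C R :: "'a set" and n :: nat and Comp :: "nat \<Rightarrow> 'a set"
begin

definition foreign_return :: "nat \<Rightarrow> 'a \<Rightarrow> bool" where
  "foreign_return t r \<longleftrightarrow> r \<in> R \<and> t < n \<and> comp r \<noteq> t"

(* The label n stands for "no pending call", against which no return is foreign. *)
definition coherent_order :: "('a list \<Rightarrow> 'a \<Rightarrow> 'a \<Rightarrow> bool) \<Rightarrow> 'a list \<Rightarrow> 'a \<Rightarrow> 'a \<Rightarrow> bool" where
  "coherent_order ord u = raise_to_top (foreign_return (top_label comp n u)) (ord u)"

lemma coherent_coherent_order: "coherent C R n Comp (coherent_order ord)"
  unfolding coherent_def
proof (intro allI impI ballI)
  fix u i a r
  assume "i < n" and "\<exists>k. pending_call C R u k"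
    and top: "u ! (GREATEST k. pending_call C R u k) \<in> C \<inter> Comp i"
    and "a \<in> Comp i" and "\<exists>j<n. j \<noteq> i \<and> r \<in> R \<inter> Comp j"
  then obtain p ps where stack: "pending_stack u = p # ps"
    using pending_stack_eq_Nil_iff by (cases "pending_stack u") auto
  then have "top_label comp n u = i"
    using top \<open>i < n\<close> by (simp add: Greatest_pending_call top_label_pending_stack_Cons in_Comp_iff)
  moreover have "comp a = i" "r \<in> R" "comp r \<noteq> i"
    using \<open>a \<in> Comp i\<close> \<open>\<exists>j<n. j \<noteq> i \<and> r \<in> R \<inter> Comp j\<close> \<open>i < n\<close> in_Comp_iff by auto
  ultimately show "coherent_order ord u a r"
    using \<open>i < n\<close> by (simp add: coherent_order_def raise_to_top_def foreign_return_def)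
qed

lemma contextual_order_coherent_order:
  "contextual_order ord \<Longrightarrow> contextual_order (coherent_order ord)"
  by (simp add: contextual_order_def coherent_order_def strict_total_raise_to_top)

lemma vp_order_coherent_order: "vp_order C R ord \<Longrightarrow> vp_order C R (coherent_order ord)"
proof -
  assume "vp_order C R ord"
  moreover have "finite (range comp)"
    by (rule finite_subset[of _ "{..<n}"]) (auto simp: comp_less)
  ultimately show ?thesis
    unfolding coherent_order_def
    by (rule vp_order_modify_by_top_label) (rule strict_total_raise_to_top)
qed

lemma well_nested_iff:
  "well_nested C R n Comp w \<longleftrightarrow> (\<forall>i j. matched C R w i j \<longrightarrow> comp (w ! i) = comp (w ! j))"
  unfolding well_nested_def using comp_less in_Comp_iff by metis

lemma well_nested_infix:
  assumes "well_nested C R n Comp (x @ y @ z)"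
  shows "well_nested C R n Comp y"
  unfolding well_nested_iff
proof (intro allI impI)
  fix i j
  assume "matched C R y i j"
  moreover have "i < length y" "j < length y"
    using \<open>matched C R y i j\<close> by (auto simp: matched_def)
  ultimately show "comp (y ! i) = comp (y ! j)"
    using matched_shift assms unfolding well_nested_iff by (fastforce simp: nth_append)
qed

lemma height_proj_well_nested:
  assumes "wm C R f" "well_nested C R n Comp f" "i < n"
  shows "height (proj (Comp i) f) = 0"
  using assms(1,2)
proof (induction rule: wm.induct)
  case (wm_nest c r u)
  have "matched C R ([c] @ u @ [r]) 0 (Suc (length u))"
    using wm_nest.hyps by (simp add: matched_def nth_append)
  then have "comp c = comp r"
    using wm_nest.prems unfolding well_nested_iff by fastforce
  moreover have "height (proj (Comp i) u) = 0"
    using wm_nest.IH well_nested_infix[of "[c]" u "[r]"] wm_nest.prems by blast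
  ultimately show ?case
    using wm_nest.hyps assms(3) by (simp add: proj_def in_Comp_iff)
next
  case (wm_app u v)
  then show ?case
    using well_nested_infix[of "[]" u v] well_nested_infix[of u v "[]"] by (simp add: proj_def)
qed (simp_all add: proj_def)

lemma ex_innermost_ill_nested_match:
  assumes "\<not> well_nested C R n Comp z"
  obtains p q where "matched C R z p q" "comp (z ! p) \<noteq> comp (z ! q)"
    "well_nested C R n Comp (take (q - Suc p) (drop (Suc p) z))"
proof -
  define ill where "ill q \<longleftrightarrow> (\<exists>p. matched C R z p q \<and> comp (z ! p) \<noteq> comp (z ! q))" for q
  have "\<exists>q. ill q"
    using assms unfolding well_nested_iff ill_def by blast
  define q where "q = (LEAST q. ill q)"
  obtain p where pq: "matched C R z p q" "comp (z ! p) \<noteq> comp (z ! q)"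
    using LeastI_ex[OF \<open>\<exists>q. ill q\<close>] unfolding q_def ill_def by blast
  define f where "f = take (q - Suc p) (drop (Suc p) z)"
  have "p < q" "q < length z"
    using pq(1) by (simp_all add: matched_def)
  then have "take (Suc p) z @ f = take q z"
    using take_add[of "Suc p" "q - Suc p" z] unfolding f_def by simp
  then have z: "z = (take (Suc p) z @ f) @ drop q z"
    by (simp only: append_take_drop_id)
  have "well_nested C R n Comp f"
    unfolding well_nested_iff
  proof (intro allI impI)
    fix a b
    assume ab: "matched C R f a b"
    then have "matched C R z (Suc p + a) (Suc p + b)"
      using matched_shift[OF ab, of "take (Suc p) z" "drop q z"] z \<open>p < q\<close> \<open>q < length z\<close>
      by simp
    moreover have "a < length f" "b < length f"
      using ab by (auto simp: matched_def)
    moreover have "Suc p + b < q"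
      using \<open>b < length f\<close> \<open>p < q\<close> \<open>q < length z\<close> unfolding f_def by simp
    then have "\<not> ill (Suc p + b)"
      using not_less_Least unfolding q_def by blast
    ultimately show "comp (f ! a) = comp (f ! b)"
      unfolding ill_def f_def by auto
  qed
  then show thesis
    using that pq unfolding f_def by blast
qed

lemma ex_component_letter_after_match:
  assumes "well_matched C R (proj (Comp i) z)" "i < n"
    and "matched C R z p q" "comp (z ! p) = i"
    and "well_nested C R n Comp (take (q - Suc p) (drop (Suc p) z))"
  shows "\<exists>l. q \<le> l \<and> l < length z \<and> comp (z ! l) = i"
proof (rule ccontr)
  assume none: "\<not> (\<exists>l. q \<le> l \<and> l < length z \<and> comp (z ! l) = i)"
  define f where "f = take (q - Suc p) (drop (Suc p) z)"
  have "p < q" "q < length z" "z ! p \<in> C" "wm C R f"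
    using assms(3) unfolding matched_def f_def by auto
  then have "take p z @ z ! p # f = take q z"
    using take_add[of "Suc p" "q - Suc p" z] unfolding f_def by (simp add: take_Suc_conv_app_nth)
  then have z: "z = (take p z @ z ! p # f) @ drop q z"
    by (simp only: append_take_drop_id)
  have "x \<notin> Comp i" if x: "x \<in> set (drop q z)" for x
  proof -
    obtain l where "l < length (drop q z)" "x = drop q z ! l"
      using x unfolding in_set_conv_nth by blast
    then show ?thesis
      using none[unfolded not_ex, rule_format, of "q + l"] assms(2) in_Comp_iff by auto
  qed
  then have "proj (Comp i) (drop q z) = []"
    by (simp add: proj_def filter_empty_conv)
  moreover have "z ! p \<in> Comp i"
    using assms(2,4) in_Comp_iff by blast
  ultimately have proj_z: "proj (Comp i) z = proj (Comp i) (take p z) @ z ! p # proj (Comp i) f"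
    using arg_cong[OF z, of "proj (Comp i)"] by (simp add: proj_def)
  have "balanced (proj (Comp i) z)"
    using assms(1) by (rule well_matched_imp_balanced)
  then have "height (proj (Comp i) z) = 0" "0 \<le> height (proj (Comp i) (take p z))"
    unfolding balanced_def proj_z by (auto dest: spec[of _ "length (proj (Comp i) (take p z))"])
  moreover have "height (proj (Comp i) f) = 0"
    using \<open>wm C R f\<close> assms(5) assms(2) unfolding f_def by (rule height_proj_well_nested)
  ultimately show False
    using \<open>z ! p \<in> C\<close> unfolding proj_z by simp
qed

lemma ctx_le_coherent_order_top_component:
  assumes "pending_stack \<alpha> = p # ps" "comp a = comp (\<alpha> ! p)" "r \<in> R" "comp r \<noteq> comp (\<alpha> ! p)"
  shows "ctx_le (coherent_order ord) (\<alpha> @ a # v) (\<alpha> @ r # v')"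
proof -
  have "coherent_order ord \<alpha> a r"
    using assms comp_less
    by (simp add: coherent_order_def raise_to_top_def foreign_return_def top_label_pending_stack_Cons)
  then show ?thesis
    unfolding ctx_le_def by blast
qed

lemma well_nested_not_foreign_return:
  assumes "well_nested C R n Comp (\<alpha> @ r # v)"
  shows "\<not> foreign_return (top_label comp n \<alpha>) r"
proof
  assume foreign: "foreign_return (top_label comp n \<alpha>) r"
  then obtain p ps where stack: "pending_stack \<alpha> = p # ps"
    using top_label_pending_stack_Nil by (cases "pending_stack \<alpha>") (auto simp: foreign_return_def)
  then have "matched C R (\<alpha> @ r # v) p (length \<alpha>)"
    using foreign matched_top_pending_call by (simp add: foreign_return_def)
  moreover have "p < length \<alpha>"
    using pending_stack_ConsD(1)[OF stack] by (simp add: pending_call_def)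
  ultimately have "comp (\<alpha> ! p) = comp r"
    using assms unfolding well_nested_iff by (fastforce simp: nth_append)
  then show False
    using foreign stack by (simp add: foreign_return_def top_label_pending_stack_Cons)
qed

(* The first letter after q in the component of z ! p commutes back to position q, where it beats
   the foreign return z ! q. *)
lemma ex_coherent_smaller_trace_eq:
  assumes pq: "matched C R z p q" "comp (z ! p) \<noteq> comp (z ! q)"
    and "\<exists>l. q \<le> l \<and> l < length z \<and> comp (z ! l) = comp (z ! p)"
  obtains u where "trace_eq n Comp u z" "ctx_le (coherent_order ord) u z" "u \<noteq> z"
proof -
  define i where "i = comp (z ! p)"
  define l where "l = (LEAST l. q \<le> l \<and> l < length z \<and> comp (z ! l) = i)"
  have l: "q \<le> l" "l < length z" "comp (z ! l) = i"
    using LeastI_ex[OF assms(3)[folded i_def]] unfolding l_def by blast+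
  have between: "comp (z ! k) \<noteq> i" if "q \<le> k" "k < l" for k
    using not_less_Least[of k] that l(2) unfolding l_def by fastforce
  define \<alpha> where "\<alpha> = take q z"
  define x where "x = take (l - q) (drop q z)"
  have "q < l" "p < q" "z ! q \<in> R"
    using l pq unfolding i_def matched_def by (auto simp: le_less)
  have z_split: "z = \<alpha> @ x @ z ! l # drop (Suc l) z"
    using take_add[of q "l - q" z] id_take_nth_drop[OF l(2)] \<open>q < l\<close> unfolding \<alpha>_def x_def by simp
  define u where "u = \<alpha> @ z ! l # x @ drop (Suc l) z"
  have "\<forall>b \<in> set x. indep n Comp (z ! l) b"
  proof
    fix b
    assume "b \<in> set x"
    then obtain k where "k < l - q" "b = z ! (q + k)"
      unfolding x_def in_set_conv_nth by auto
    then have "comp b \<noteq> i"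
      using between[of "q + k"] by simp
    then show "indep n Comp (z ! l) b"
      using l(3) by (simp add: indep_iff)
  qed
  then have "trace_eq n Comp u z"
    using trace_eq_move_left trace_eq_sym z_split unfolding u_def by metis
  moreover have "ctx_le (coherent_order ord) u z"
  proof -
    obtain ps where "pending_stack \<alpha> = p # ps"
      using matched_imp_top_pending_call[OF pq(1)] unfolding \<alpha>_def by blast
    moreover have "\<alpha> ! p = z ! p" "z = \<alpha> @ z ! q # drop (Suc q) z"
      using \<open>p < q\<close> l(2) \<open>q < l\<close> id_take_nth_drop[of q z] unfolding \<alpha>_def by simp_all
    ultimately show ?thesis
      using ctx_le_coherent_order_top_component[of \<alpha> p ps "z ! l" "z ! q"] l(3) pq(2) \<open>z ! q \<in> R\<close>
      unfolding u_def i_def by metis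
  qed
  moreover have "u ! q = z ! l"
    using l(2) \<open>q < l\<close> unfolding u_def \<alpha>_def by (simp add: nth_append)
  then have "u \<noteq> z"
    using pq(2) l(3) unfolding i_def by auto
  ultimately show thesis
    using that by blast
qed

lemma well_nested_if_red_shuffle:
  assumes wm: "\<forall>i<n. \<forall>w \<in> P i. well_matched C R w"
    and z: "z \<in> red n Comp (coherent_order ord) (shuffle n Comp P)"
  shows "well_nested C R n Comp z"
proof (rule ccontr)
  assume "\<not> well_nested C R n Comp z"
  then obtain p q where pq: "matched C R z p q" "comp (z ! p) \<noteq> comp (z ! q)"
    and inner: "well_nested C R n Comp (take (q - Suc p) (drop (Suc p) z))"
    by (rule ex_innermost_ill_nested_match)
  have "z \<in> shuffle n Comp P"
    using z by (simp add: red_def)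
  then have "well_matched C R (proj (Comp (comp (z ! p))) z)"
    using wm comp_less unfolding shuffle_def by blast
  then have "\<exists>l. q \<le> l \<and> l < length z \<and> comp (z ! l) = comp (z ! p)"
    using ex_component_letter_after_match comp_less pq(1) inner by blast
  then obtain u where "trace_eq n Comp u z" "ctx_le (coherent_order ord) u z" "u \<noteq> z"
    using ex_coherent_smaller_trace_eq pq by blast
  moreover have "u \<in> shuffle n Comp P"
    using shuffle_trace_eq \<open>trace_eq n Comp u z\<close> \<open>z \<in> shuffle n Comp P\<close> by blast
  ultimately show False
    using z unfolding red_def by blast
qed

lemma red_wn_shuffle_if_red_shuffle:
  assumes wm: "\<forall>i<n. \<forall>w \<in> P i. well_matched C R w" and co: "contextual_order ord"
    and z: "z \<in> red n Comp (coherent_order ord) (shuffle n Comp P)"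
  shows "z \<in> red n Comp ord (wn_shuffle C R n Comp P)"
proof -
  have z_shuffle: "z \<in> shuffle n Comp P"
    using z by (simp add: red_def)
  have "u = z" if u: "u \<in> wn_shuffle C R n Comp P" "trace_eq n Comp u z" "ctx_le ord u z" for u
  proof (rule ccontr)
    assume "u \<noteq> z"
    have "length u = length z"
      using u(2) by (rule trace_eq_length)
    then obtain k where k: "k < length u" "take k u = take k z" "ord (take k u) (u ! k) (z ! k)"
      using u(3) \<open>u \<noteq> z\<close> ctx_le_same_length_iff by blast
    define \<alpha> where "\<alpha> = take k z"
    (* The two orders disagree on u ! k and z ! k, so u ! k is a foreign return. *)
    have total: "strict_total (ord \<alpha>)" "strict_total (coherent_order ord \<alpha>)"
      using co contextual_order_coherent_order[OF co] unfolding contextual_order_def by blast+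
    have "u \<in> shuffle n Comp P"
      using u(1) by (simp add: wn_shuffle_def)
    then have "\<not> ctx_le (coherent_order ord) u z"
      using z u(2) \<open>u \<noteq> z\<close> unfolding red_def by blast
    then have "\<not> coherent_order ord \<alpha> (u ! k) (z ! k)"
      using ctx_le_same_length_iff[OF \<open>length u = length z\<close>] k unfolding \<alpha>_def by auto
    moreover have "u ! k \<noteq> z ! k"
      using k(3) total(1) strict_total_irrefl unfolding \<alpha>_def k(2) by metis
    ultimately have "coherent_order ord \<alpha> (z ! k) (u ! k)"
      using strict_total_neq_cases[OF total(2)] by blast
    then have "foreign_return (top_label comp n \<alpha>) (u ! k)"
      using raise_to_top_reverses(1)[OF total(1)] k(3) unfolding coherent_order_def \<alpha>_def k(2) by blast
    moreover have "u = \<alpha> @ u ! k # drop (Suc k) u"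
      using id_take_nth_drop[OF k(1)] k(2) unfolding \<alpha>_def by simp
    then have "well_nested C R n Comp (\<alpha> @ u ! k # drop (Suc k) u)"
      using u(1) by (simp add: wn_shuffle_def)
    ultimately show False
      using well_nested_not_foreign_return by blast
  qed
  then show ?thesis
    using well_nested_if_red_shuffle[OF wm z] z_shuffle unfolding red_def wn_shuffle_def by blast
qed

lemma red_shuffle_if_red_wn_shuffle:
  assumes wm: "\<forall>i<n. \<forall>w \<in> P i. well_matched C R w" and co: "contextual_order ord"
    and w: "w \<in> red n Comp ord (wn_shuffle C R n Comp P)"
  shows "w \<in> red n Comp (coherent_order ord) (shuffle n Comp P)"
proof -
  define E where "E = {x \<in> shuffle n Comp P. trace_eq n Comp x w}"
  have "finite E"
    using finite_trace_class[of n Comp w] unfolding E_def by (rule finite_subset[rotated]) blast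
  moreover have "w \<in> E"
    using w unfolding E_def red_def wn_shuffle_def trace_eq_def by simp
  moreover have "\<forall>x \<in> E. length x = length w"
    unfolding E_def using trace_eq_length by blast
  ultimately obtain z where "z \<in> E" and z_min: "\<forall>x \<in> E. ctx_le (coherent_order ord) x z \<longrightarrow> x = z"
    using ex_ctx_le_minimal[OF contextual_order_coherent_order[OF co]] by blast
  then have zw: "trace_eq n Comp z w"
    unfolding E_def by blast
  have z_red: "z \<in> red n Comp (coherent_order ord) (shuffle n Comp P)"
    using \<open>z \<in> E\<close> z_min trace_eq_trans[OF _ zw] unfolding E_def red_def by blast
  then have "z \<in> red n Comp ord (wn_shuffle C R n Comp P)"
    by (rule red_wn_shuffle_if_red_shuffle[OF wm co])
  moreover have "ctx_le ord z w \<or> ctx_le ord w z"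
    using ctx_le_total[OF co trace_eq_length[OF zw]] .
  ultimately have "z = w"
    using w zw trace_eq_sym[OF zw] unfolding red_def by blast
  then show ?thesis
    using z_red by simp
qed

end

theorem lemma4p3:
  fixes C R :: "'a::finite set" and n :: nat and Comp :: "nat \<Rightarrow> 'a set"
    and ord :: "'a list \<Rightarrow> 'a \<Rightarrow> 'a \<Rightarrow> bool"
  assumes CR: "C \<inter> R = {}"
    and disj: "\<forall>i<n. \<forall>j<n. i \<noteq> j \<longrightarrow> Comp i \<inter> Comp j = {}"
    and cover: "(\<Union>i<n. Comp i) = UNIV"
    and vp: "vp_order C R ord"
  shows "\<exists>ord'. coherent C R n Comp ord' \<and> vp_order C R ord' \<and>
     (\<forall>P. (\<forall>i<n. P i \<subseteq> lists (Comp i) \<and> (\<forall>w \<in> P i. well_matched C R w)) \<longrightarrow>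
          red n Comp ord (wn_shuffle C R n Comp P) = red n Comp ord' (shuffle n Comp P))"
proof -
  interpret partitioned_vp_alphabet C R n Comp
    using CR disj cover by unfold_locales
  have co: "contextual_order ord"
    using vp by (rule vp_order_contextual_order)
  show ?thesis
  proof (intro exI conjI allI impI)
    show "coherent C R n Comp (coherent_order ord)"
      by (rule coherent_coherent_order)
    show "vp_order C R (coherent_order ord)"
      using vp by (rule vp_order_coherent_order)
    fix P
    assume "\<forall>i<n. P i \<subseteq> lists (Comp i) \<and> (\<forall>w \<in> P i. well_matched C R w)"
    then have wm: "\<forall>i<n. \<forall>w \<in> P i. well_matched C R w"
      by blast
    show "red n Comp ord (wn_shuffle C R n Comp P) = red n Comp (coherent_order ord) (shuffle n Comp P)"
      using red_wn_shuffle_if_red_shuffle[OF wm co] red_shuffle_if_red_wn_shuffle[OF wm co] by blast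
  qed
qed

end
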